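(* Fix $d\ge2$. There exists $C>0$ such that for all $n\ge1$, $$\mathrm{card}\,\mathrm{Diag}(n)\le C n^{d-1}.$$
   Context: Consider the tessellation of $\mathbb{R}^d$ by the unit cubes $k+[0,1]^d$, $k\in\mathbb{Z}^d$; faces are faces of these cubes. For faces $A,B$ of dimension at most $d-2$, the diagonal $\gamma_{A,B}$ is the set of oriented segments starting in $A$ and ending in $B$ (not meeting other faces of dimension at most $d-2$ in between); $A,B$ are at combinatorial length $n$ if every such segment passes through $n$ cubes, and then $\gamma_{A,B}$ has combinatorial length $n$. $\mathrm{Diag}(n)$ is the set of diagonals of combinatorial length $n$ whose initial segment lies in $[0,1]^d$. *)

theory Defs
  imports "HOL-Analysis.Analysis"
begin

definition unit_cube :: "int^'d \<Rightarrow> (real^'d) set" where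
  "unit_cube k = {x. \<forall>i. of_int (k$i) \<le> x$i \<and> x$i \<le> of_int (k$i) + 1}"

definition tess_face :: "int^'d \<Rightarrow> 'd set \<Rightarrow> (real^'d) set" where
  "tess_face m S = {x. \<forall>i. (i \<in> S \<longrightarrow> x$i = of_int (m$i)) \<and>
                            (i \<notin> S \<longrightarrow> of_int (m$i) \<le> x$i \<and> x$i \<le> of_int (m$i) + 1)}"

text \<open>Faces of dimension at most d-2 (i.e. at least two fixed coordinates).\<close>
definition low_faces :: "(real^'d) set set" where
  "low_faces = {tess_face m S | m S. 2 \<le> card S}"

definition skeleton :: "(real^'d) set" where
  "skeleton = \<Union> low_faces"

definition diagonal :: "(real^'d) set \<Rightarrow> (real^'d) set \<Rightarrow> ((real^'d) \<times> (real^'d)) set" where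
  "diagonal A B = {(a,b). a \<in> A \<and> b \<in> B \<and> a \<noteq> b \<and> open_segment a b \<inter> skeleton = {}}"

definition cubes_crossed :: "(real^'d) \<Rightarrow> (real^'d) \<Rightarrow> nat" where
  "cubes_crossed a b = card {k. closed_segment a b \<inter> interior (unit_cube k) \<noteq> {}}"

definition comb_length :: "(real^'d) set \<Rightarrow> (real^'d) set \<Rightarrow> nat \<Rightarrow> bool" where
  "comb_length A B n \<longleftrightarrow> (\<forall>(a,b) \<in> diagonal A B. cubes_crossed a b = n)"

definition initial_in_unit_cube :: "(real^'d) \<Rightarrow> (real^'d) \<Rightarrow> bool" where
  "initial_in_unit_cube a b \<longleftrightarrow>
     (\<exists>\<epsilon>>0. closed_segment a (a + \<epsilon> *\<^sub>R (b - a)) \<subseteq> unit_cube 0)"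

definition Diag :: "nat \<Rightarrow> (((real^'d) \<times> (real^'d)) set) set" where
  "Diag n = {diagonal A B | A B. A \<in> low_faces \<and> B \<in> low_faces \<and> diagonal A B \<noteq> {}
               \<and> comb_length A B n
               \<and> (\<forall>(a,b) \<in> diagonal A B. initial_in_unit_cube a b)}"

end

theory Submission
  imports Defs
begin

text \<open>A segment from $a$ to $b$ that avoids the skeleton meets between $\|b - a\|_1 - d$ and
  $\|b - a\|_1 + d + 1$ cubes. Below: every crossing of an integer hyperplane starts a new cube,
  and no two crossings are simultaneous. Above: the sum of the coordinates of the current cube,
  each signed by the direction in which the segment moves along that axis, increases strictly from
  cube to cube and is confined to an interval of length $\|b - a\|_1 + d$. So a diagonal of combinatorial length $n$ starting
  in $[0,1]^d$ ends on a face whose lattice vertex lies in the shell $n - O(d) \le \|m\|_1 \le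
  n + O(d)$, which contains $O(n^{d-1})$ points; a diagonal is determined by its two faces, and
  the first one lies near the origin.\<close>

section \<open>Geometry of the tessellation\<close>

lemma interior_unit_cube:
  "interior (unit_cube k) = {x. \<forall>i. of_int (k$i) < x$i \<and> x$i < of_int (k$i) + 1}"
proof -
  have "unit_cube k = cbox (\<chi> i. of_int (k$i)) (\<chi> i. of_int (k$i) + 1)"
    unfolding unit_cube_def by (auto simp: mem_box_cart)
  then show ?thesis by (auto simp: interior_cbox mem_box_cart)
qed

lemma tess_face_coordinate_bounds:
  assumes "x \<in> tess_face m S"
  shows "of_int (m$i) \<le> x$i \<and> x$i \<le> of_int (m$i) + 1"
  using assms unfolding tess_face_def by (cases "i \<in> S") auto

lemma two_integral_coordinates_in_skeleton:
  fixes x :: "real^'d"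
  assumes "i \<noteq> j" "x$i \<in> \<int>" "x$j \<in> \<int>"
  shows "x \<in> skeleton"
proof -
  have floor_eq: "of_int \<lfloor>x$l\<rfloor> = x$l" if "x$l \<in> \<int>" for l
    using that by (auto elim: Ints_cases)
  have "x \<in> tess_face (\<chi> l. \<lfloor>x$l\<rfloor>) {i,j}"
    unfolding tess_face_def using floor_eq assms by auto
  moreover have "tess_face (\<chi> l. \<lfloor>x$l\<rfloor>) {i,j} \<in> low_faces"
    unfolding low_faces_def using assms(1) by force
  ultimately show ?thesis unfolding skeleton_def by blast
qed

section \<open>Cubes met by a segment\<close>

definition seg_point :: "real^'d \<Rightarrow> real^'d \<Rightarrow> real \<Rightarrow> real^'d" where
  "seg_point a b u = (1 - u) *\<^sub>R a + u *\<^sub>R b"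

lemma seg_point_nth [simp]: "seg_point a b u $ i = (1 - u) * a$i + u * b$i"
  by (simp add: seg_point_def)

definition cubes_met :: "real^'d \<Rightarrow> real^'d \<Rightarrow> (int^'d) set" where
  "cubes_met a b = {k. closed_segment a b \<inter> interior (unit_cube k) \<noteq> {}}"

lemma cubes_crossed_eq_card: "cubes_crossed a b = card (cubes_met a b)"
  by (simp add: cubes_crossed_def cubes_met_def)

lemma mem_cubes_met_iff:
  "k \<in> cubes_met a b \<longleftrightarrow> (\<exists>u. 0 \<le> u \<and> u \<le> 1 \<and>
     (\<forall>i. of_int (k$i) < seg_point a b u $ i \<and> seg_point a b u $ i < of_int (k$i) + 1))"
proof -
  have "closed_segment a b = seg_point a b ` {0..1}"
    by (force simp: in_segment seg_point_def image_def)
  then show ?thesis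
    unfolding cubes_met_def interior_unit_cube disjoint_iff by (auto simp del: seg_point_nth)
qed

lemma int_open_interval_eq:
  fixes L U :: real
  shows "{v::int. L < of_int v \<and> of_int v < U} = {\<lfloor>L\<rfloor> + 1 .. \<lceil>U\<rceil> - 1}"
proof -
  have "L < of_int v \<longleftrightarrow> \<lfloor>L\<rfloor> + 1 \<le> v" for v using floor_less_iff[of L v] by linarith
  moreover have "of_int v < U \<longleftrightarrow> v \<le> \<lceil>U\<rceil> - 1" for v using less_ceiling_iff[of v U] by linarith
  ultimately show ?thesis by auto
qed

lemma finite_int_open_interval:
  fixes L U :: real
  shows "finite {v::int. L < of_int v \<and> of_int v < U}"
  unfolding int_open_interval_eq by simp

lemma card_int_open_interval_le:
  fixes L U :: real
  assumes "L \<le> U"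
  shows "real (card {v::int. L < of_int v \<and> of_int v < U}) \<le> U - L + 1"
  unfolding int_open_interval_eq using assms ceiling_correct[of U] of_int_floor_le[of L] by simp linarith

lemma card_int_open_interval_ge:
  fixes L U :: real
  shows "U - L - 1 \<le> real (card {v::int. L < of_int v \<and> of_int v < U})"
  unfolding int_open_interval_eq using le_of_int_ceiling[of U] of_int_floor_le[of L] by simp linarith

definition direction :: "real \<Rightarrow> real \<Rightarrow> int" where
  "direction x y = (if x < y then 1 else if y < x then -1 else 0)"

lemma convex_comb_between:
  fixes x y u :: real
  assumes "0 \<le> u" "u \<le> 1" "x \<le> y"
  shows "x \<le> (1 - u) * x + u * y" "(1 - u) * x + u * y \<le> y"
proof -
  have "0 \<le> u * (y - x)" "0 \<le> (1 - u) * (y - x)" using assms by auto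
  then show "x \<le> (1 - u) * x + u * y" "(1 - u) * x + u * y \<le> y" by (auto simp: algebra_simps)
qed

lemma convex_comb_mono:
  fixes x y u u' :: real
  assumes "u \<le> u'" "x \<le> y"
  shows "(1 - u) * x + u * y \<le> (1 - u') * x + u' * y"
proof -
  have "u * (y - x) \<le> u' * (y - x)" using assms by (simp add: mult_right_mono)
  then show ?thesis by (auto simp: algebra_simps)
qed

lemma convex_comb_strict_mono:
  fixes x y u u' :: real
  assumes "u < u'" "x < y"
  shows "(1 - u) * x + u * y < (1 - u') * x + u' * y"
proof -
  have "u * (y - x) < u' * (y - x)" using assms by (simp add: mult_strict_right_mono)
  then show ?thesis by (auto simp: algebra_simps)
qed

lemma direction_cell_index_bounds:
  fixes x y u :: real and k :: int
  assumes "0 \<le> u" "u \<le> 1" "k < (1 - u) * x + u * y" "(1 - u) * x + u * y < k + 1"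
  shows "(if x < y then x - 1 else if y < x then - x else - 1/2) < of_int (direction x y * k)
       \<and> of_int (direction x y * k) < (if x < y then y else if y < x then 1 - y else 1/2)"
  using convex_comb_between[of u x y] convex_comb_between[of u y x] assms
  by (auto simp: direction_def algebra_simps)

lemma direction_cell_index_mono:
  fixes x y u u' :: real and k k' :: int
  assumes "u \<le> u'"
    and "k < (1 - u) * x + u * y" "(1 - u) * x + u * y < k + 1"
    and "k' < (1 - u') * x + u' * y" "(1 - u') * x + u' * y < k' + 1"
  shows "direction x y * k \<le> direction x y * k' \<and> (direction x y = 0 \<longrightarrow> k = k')"
proof -
  consider "x < y" | "y < x" | "x = y" by linarith
  then show ?thesis
  proof cases
    case 1
    then have "real_of_int k < k' + 1" using convex_comb_mono[of u u' x y] assms by simp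
    then show ?thesis using 1 by (simp add: direction_def)
  next
    case 2
    have "(1 - u) * y + u * x \<le> (1 - u') * y + u' * x"
      using convex_comb_mono[of "1 - u'" "1 - u" y x] assms 2 by (simp add: algebra_simps)
    then have "real_of_int k' < k + 1" using assms by (simp add: algebra_simps)
    then show ?thesis using 2 by (simp add: direction_def)
  next
    case 3
    then have "real_of_int k < k' + 1" "real_of_int k' < k + 1" using assms by (auto simp: algebra_simps)
    then show ?thesis by (simp add: direction_def)
  qed
qed

definition directed_index_sum :: "real^'d \<Rightarrow> real^'d \<Rightarrow> int^'d \<Rightarrow> int" where
  "directed_index_sum a b k = (\<Sum>i\<in>UNIV. direction (a$i) (b$i) * k$i)"

lemma inj_on_directed_index_sum: "inj_on (directed_index_sum a b) (cubes_met a b)"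
proof -
  have eq: "k = k'"
    if "u \<le> u'" "directed_index_sum a b k = directed_index_sum a b k'"
      and "\<forall>i. of_int (k$i) < seg_point a b u $ i \<and> seg_point a b u $ i < of_int (k$i) + 1"
      and "\<forall>i. of_int (k'$i) < seg_point a b u' $ i \<and> seg_point a b u' $ i < of_int (k'$i) + 1"
    for u u' k k'
  proof -
    let ?s = "\<lambda>i. direction (a$i) (b$i)"
    have mono: "?s i * k$i \<le> ?s i * k'$i \<and> (?s i = 0 \<longrightarrow> k$i = k'$i)" for i
      using direction_cell_index_mono[of u u' "k$i" "a$i" "b$i" "k'$i"] that by auto
    have "(\<Sum>i\<in>UNIV. ?s i * k'$i - ?s i * k$i) = 0"
      using that(2) by (simp add: directed_index_sum_def sum_subtractf)
    then have "\<forall>i\<in>UNIV. ?s i * k'$i - ?s i * k$i = 0"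
      using mono by (subst sum_nonneg_eq_0_iff[symmetric]) auto
    then have "k$i = k'$i" for i using mono[of i] by (auto simp: direction_def split: if_splits)
    then show ?thesis by (simp add: vec_eq_iff)
  qed
  show ?thesis
  proof (rule inj_onI)
    fix k k' assume "k \<in> cubes_met a b" "k' \<in> cubes_met a b"
      and "directed_index_sum a b k = directed_index_sum a b k'"
    then show "k = k'"
      unfolding mem_cubes_met_iff using eq by (metis linorder_le_cases)
  qed
qed

lemma directed_index_sum_cubes_met_bounds:
  fixes a b :: "real^'d"
  defines "L \<equiv> (\<Sum>i\<in>UNIV. if a$i < b$i then a$i - 1 else if b$i < a$i then - a$i else - 1/2)"
    and "U \<equiv> (\<Sum>i\<in>UNIV. if a$i < b$i then b$i else if b$i < a$i then 1 - b$i else 1/2)"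
  assumes "k \<in> cubes_met a b"
  shows "L < of_int (directed_index_sum a b k) \<and> of_int (directed_index_sum a b k) < U"
proof -
  obtain u where u: "0 \<le> u" "u \<le> 1"
    "\<forall>i. of_int (k$i) < seg_point a b u $ i \<and> seg_point a b u $ i < of_int (k$i) + 1"
    using assms(3) unfolding mem_cubes_met_iff by blast
  note bounds = direction_cell_index_bounds[OF u(1,2)] u(3)
  show ?thesis
    unfolding L_def U_def directed_index_sum_def of_int_sum
    by (intro conjI sum_strict_mono) (use bounds in auto)
qed

lemma cubes_crossed_le:
  fixes a b :: "real^'d"
  shows "finite (cubes_met a b)"
    and "real (cubes_crossed a b) \<le> (\<Sum>i\<in>UNIV. \<bar>b$i - a$i\<bar>) + CARD('d) + 1"
proof -
  define L where "L = (\<Sum>i\<in>UNIV. if a$i < b$i then a$i - 1 else if b$i < a$i then - a$i else - 1/2)"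
  define U where "U = (\<Sum>i\<in>UNIV. if a$i < b$i then b$i else if b$i < a$i then 1 - b$i else 1/2)"
  define V where "V = {v::int. L < of_int v \<and> of_int v < U}"
  have sub: "directed_index_sum a b ` cubes_met a b \<subseteq> V"
    using directed_index_sum_cubes_met_bounds unfolding L_def U_def V_def by blast
  have width: "U - L = (\<Sum>i\<in>UNIV. \<bar>b$i - a$i\<bar>) + CARD('d)"
  proof -
    have "U - L = (\<Sum>i\<in>UNIV. \<bar>b$i - a$i\<bar> + 1)"
      unfolding L_def U_def sum_subtractf[symmetric] by (rule sum.cong) auto
    then show ?thesis by (simp add: sum.distrib)
  qed
  have "finite V" unfolding V_def by (rule finite_int_open_interval)
  then show "finite (cubes_met a b)"
    using finite_imageD[OF finite_subset[OF sub] inj_on_directed_index_sum] by blast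
  have "0 \<le> (\<Sum>i\<in>UNIV. \<bar>b$i - a$i\<bar>)" by (simp add: sum_nonneg)
  then have "real (card V) \<le> U - L + 1"
    unfolding V_def using width by (intro card_int_open_interval_le) linarith
  moreover have "cubes_crossed a b \<le> card V"
    unfolding cubes_crossed_eq_card by (rule card_inj_on_le[OF inj_on_directed_index_sum sub \<open>finite V\<close>])
  ultimately show "real (cubes_crossed a b) \<le> (\<Sum>i\<in>UNIV. \<bar>b$i - a$i\<bar>) + CARD('d) + 1"
    using width by linarith
qed

lemma eventually_in_cell_after:
  fixes x y u :: real
  defines "p \<equiv> (1 - u) * x + u * y"
  defines "k \<equiv> if x \<le> y then \<lfloor>p\<rfloor> else \<lceil>p\<rceil> - 1"
  assumes "x \<noteq> y \<or> x \<notin> \<int>"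
  shows "\<forall>\<^sub>F e in at_right 0. of_int k < (1 - (u + e)) * x + (u + e) * y
                          \<and> (1 - (u + e)) * x + (u + e) * y < of_int k + 1"
proof -
  have eq: "(1 - (u + e)) * x + (u + e) * y = p + e * (y - x)" for e
    unfolding p_def by (simp add: algebra_simps)
  have lim: "((\<lambda>e. p + e * (y - x)) \<longlongrightarrow> p) (at_right 0)"
    by (auto intro!: tendsto_eq_intros)
  have pos: "\<forall>\<^sub>F e in at_right 0. (0::real) < e" by (simp add: eventually_at_right_less)
  consider "x < y" | "y < x" | "x = y" "x \<notin> \<int>" using assms(3) by linarith
  then show ?thesis
  proof cases
    case 1
    then have k: "k = \<lfloor>p\<rfloor>" unfolding k_def by simp
    have "\<forall>\<^sub>F e in at_right 0. p + e * (y - x) < of_int k + 1"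
      using order_tendstoD(2)[OF lim] unfolding k by simp
    moreover have "\<forall>\<^sub>F e in at_right 0. of_int k < p + e * (y - x)"
      using pos
    proof eventually_elim
      case (elim e)
      then have "0 < e * (y - x)" using 1 by simp
      then show ?case using of_int_floor_le[of p] unfolding k by linarith
    qed
    ultimately show ?thesis unfolding eq by eventually_elim simp
  next
    case 2
    then have k: "k = \<lceil>p\<rceil> - 1" unfolding k_def by simp
    have "\<forall>\<^sub>F e in at_right 0. of_int k < p + e * (y - x)"
      using order_tendstoD(1)[OF lim, of "of_int k"] ceiling_correct[of p] unfolding k by simp
    moreover have "\<forall>\<^sub>F e in at_right 0. p + e * (y - x) < of_int k + 1"
      using pos
    proof eventually_elim
      case (elim e)
      then have "e * (y - x) < 0" using 2 by (simp add: mult_pos_neg)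
      then show ?case using le_of_int_ceiling[of p] unfolding k by linarith
    qed
    ultimately show ?thesis unfolding eq by eventually_elim simp
  next
    case 3
    then have "of_int \<lfloor>x\<rfloor> \<noteq> x" by (metis Ints_of_int)
    then have "of_int \<lfloor>x\<rfloor> < x" by (simp add: order_le_neq_trans)
    then show ?thesis using 3 real_of_int_floor_add_one_gt[of x]
      unfolding k_def p_def by (simp add: algebra_simps)
  qed
qed

definition cube_after :: "real^'d \<Rightarrow> real^'d \<Rightarrow> real \<Rightarrow> int^'d" where
  "cube_after a b u = (\<chi> j. if a$j \<le> b$j then \<lfloor>seg_point a b u $ j\<rfloor> else \<lceil>seg_point a b u $ j\<rceil> - 1)"

lemma cube_after_mem_cubes_met:
  assumes "\<forall>j. a$j = b$j \<longrightarrow> a$j \<notin> \<int>" "0 \<le> u" "u < 1"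
  shows "cube_after a b u \<in> cubes_met a b"
proof -
  have "\<forall>\<^sub>F e in at_right 0. of_int (cube_after a b u $ j) < seg_point a b (u + e) $ j
                         \<and> seg_point a b (u + e) $ j < of_int (cube_after a b u $ j) + 1" for j
  proof -
    have "a$j \<noteq> b$j \<or> a$j \<notin> \<int>" using assms(1) by blast
    from eventually_in_cell_after[OF this, of u]
    show ?thesis by (simp only: cube_after_def vec_lambda_beta seg_point_nth)
  qed
  then have "\<forall>\<^sub>F e in at_right 0. \<forall>j. of_int (cube_after a b u $ j) < seg_point a b (u + e) $ j
                                \<and> seg_point a b (u + e) $ j < of_int (cube_after a b u $ j) + 1"
    by (rule eventually_all_finite)
  moreover have "\<forall>\<^sub>F e in at_right 0. 0 < e \<and> e < 1 - u"
    using assms(3) by (simp add: eventually_at_right_field) (metis diff_gt_0_iff_gt)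
  ultimately obtain e where "0 < e" "e < 1 - u"
    "\<forall>j. of_int (cube_after a b u $ j) < seg_point a b (u + e) $ j
         \<and> seg_point a b (u + e) $ j < of_int (cube_after a b u $ j) + 1"
    using eventually_happens'[OF trivial_limit_at_right_real eventually_conj] by blast
  then show ?thesis
    unfolding mem_cubes_met_iff using assms(2) by (intro exI[of _ "u + e"]) auto
qed

lemma cube_after_neq:
  assumes "u < u'" "a$i \<noteq> b$i" "seg_point a b u' $ i = of_int m"
  shows "cube_after a b u \<noteq> cube_after a b u'"
proof (cases "a$i < b$i")
  case True
  then have "seg_point a b u $ i < of_int m"
    using convex_comb_strict_mono[OF assms(1) True] assms(3) by simp
  then have "cube_after a b u $ i < m" "cube_after a b u' $ i = m"
    using True assms(3) by (simp_all add: cube_after_def floor_less_iff del: seg_point_nth)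
  then show ?thesis by force
next
  case False
  then have lt: "b$i < a$i" using assms(2) by simp
  have "(1 - (1 - u')) * b$i + (1 - u') * a$i < (1 - (1 - u)) * b$i + (1 - u) * a$i"
    using convex_comb_strict_mono[of "1 - u'" "1 - u"] assms(1) lt by simp
  then have "of_int m < seg_point a b u $ i" using assms(3) by (simp add: algebra_simps)
  then have "m - 1 < cube_after a b u $ i" "cube_after a b u' $ i = m - 1"
    using lt assms(3) by (simp_all add: cube_after_def less_ceiling_iff del: seg_point_nth)
  then show ?thesis by force
qed

definition crossings :: "real^'d \<Rightarrow> real^'d \<Rightarrow> ('d \<times> int) set" where
  "crossings a b = (SIGMA i:UNIV. {m. min (a$i) (b$i) < of_int m \<and> of_int m < max (a$i) (b$i)})"

definition crossing_time :: "real^'d \<Rightarrow> real^'d \<Rightarrow> 'd \<times> int \<Rightarrow> real" where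
  "crossing_time a b p = (of_int (snd p) - a$fst p) / (b$fst p - a$fst p)"

lemma crossing_time_props:
  assumes "(i, m) \<in> crossings a b"
  shows "a$i \<noteq> b$i" "0 < crossing_time a b (i, m)" "crossing_time a b (i, m) < 1"
    and "seg_point a b (crossing_time a b (i, m)) $ i = of_int m"
proof -
  have m: "min (a$i) (b$i) < m" "m < max (a$i) (b$i)" using assms unfolding crossings_def by auto
  then show ne: "a$i \<noteq> b$i" by auto
  show "0 < crossing_time a b (i, m)" "crossing_time a b (i, m) < 1"
    using m by (auto simp: crossing_time_def divide_simps min_def max_def split: if_splits)
  have "seg_point a b (crossing_time a b (i, m)) $ i = a$i + crossing_time a b (i, m) * (b$i - a$i)"
    by (simp add: algebra_simps)
  then show "seg_point a b (crossing_time a b (i, m)) $ i = of_int m"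
    using ne by (simp add: crossing_time_def)
qed

lemma integral_coordinate_unique:
  assumes "open_segment a b \<inter> skeleton = {}" "a \<noteq> b" "0 < u" "u < 1"
    and "seg_point a b u $ i \<in> \<int>" "seg_point a b u $ j \<in> \<int>"
  shows "i = j"
proof (rule ccontr)
  assume "i \<noteq> j"
  then have "seg_point a b u \<in> skeleton"
    using two_integral_coordinates_in_skeleton assms(5,6) by blast
  moreover have "seg_point a b u \<in> open_segment a b"
    unfolding in_segment seg_point_def using assms(2-4) by blast
  ultimately show False using assms(1) by blast
qed

lemma cube_after_crossing_mem_cubes_met:
  assumes avoid: "open_segment a b \<inter> skeleton = {}" and "a \<noteq> b" and "(i, m) \<in> crossings a b"
  shows "cube_after a b (crossing_time a b (i, m)) \<in> cubes_met a b"
proof -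
  note t = crossing_time_props[OF assms(3)]
  have "a$j \<notin> \<int>" if "a$j = b$j" for j
  proof
    assume "a$j \<in> \<int>"
    then have "seg_point a b (crossing_time a b (i, m)) $ j \<in> \<int>"
      using that by (simp add: algebra_simps)
    then have "i = j"
      using integral_coordinate_unique[OF avoid \<open>a \<noteq> b\<close>] t(2-4) by (metis Ints_of_int)
    then show False using t(1) that by simp
  qed
  then have "\<forall>j. a$j = b$j \<longrightarrow> a$j \<notin> \<int>" by blast
  from cube_after_mem_cubes_met[OF this] show ?thesis using t(2,3) by simp
qed

lemma card_crossings_le_cubes_crossed:
  assumes avoid: "open_segment a b \<inter> skeleton = {}" and "a \<noteq> b"
  shows "card (crossings a b) \<le> cubes_crossed a b"
proof -
  let ?G = "\<lambda>p. cube_after a b (crossing_time a b p)"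
  have "inj_on ?G (crossings a b)"
  proof (rule inj_onI)
    fix p q assume p: "p \<in> crossings a b" and q: "q \<in> crossings a b" and eq: "?G p = ?G q"
    obtain i m where p_eq: "p = (i, m)" by force
    obtain j n where q_eq: "q = (j, n)" by force
    have eq': "?G (i, m) = ?G (j, n)" using eq p_eq q_eq by simp
    note tp = crossing_time_props[OF p[unfolded p_eq]]
      and tq = crossing_time_props[OF q[unfolded q_eq]]
    consider "crossing_time a b (i, m) = crossing_time a b (j, n)"
      | "crossing_time a b (i, m) < crossing_time a b (j, n)"
      | "crossing_time a b (j, n) < crossing_time a b (i, m)"
      by linarith
    then show "p = q"
    proof cases
      case 1
      then have "i = j"
        using integral_coordinate_unique[OF avoid \<open>a \<noteq> b\<close>] tp(2-4) tq(4) by (metis Ints_of_int)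
      then show ?thesis using 1 tp(4) tq(4) p_eq q_eq by simp
    next
      case 2
      then show ?thesis using cube_after_neq[OF 2 tq(1,4)] eq' by simp
    next
      case 3
      then show ?thesis using cube_after_neq[OF 3 tp(1,4)] eq' by simp
    qed
  qed
  then show ?thesis
    unfolding cubes_crossed_eq_card
    using cube_after_crossing_mem_cubes_met[OF assms] cubes_crossed_le(1)
    by (intro card_inj_on_le) auto
qed

lemma card_crossings_ge:
  fixes a b :: "real^'d"
  shows "(\<Sum>i\<in>UNIV. \<bar>b$i - a$i\<bar>) - CARD('d) \<le> real (card (crossings a b))"
proof -
  let ?I = "\<lambda>i. {m::int. min (a$i) (b$i) < of_int m \<and> of_int m < max (a$i) (b$i)}"
  have "card (crossings a b) = (\<Sum>i\<in>UNIV. card (?I i))"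
    unfolding crossings_def by (rule card_SigmaI) (auto simp: finite_int_open_interval)
  moreover have "(\<Sum>i\<in>UNIV. \<bar>b$i - a$i\<bar> - 1) \<le> (\<Sum>i\<in>UNIV. real (card (?I i)))"
  proof (rule sum_mono)
    fix i
    have "\<bar>b$i - a$i\<bar> = max (a$i) (b$i) - min (a$i) (b$i)" by auto
    then show "\<bar>b$i - a$i\<bar> - 1 \<le> real (card (?I i))"
      using card_int_open_interval_ge[of "max (a$i) (b$i)" "min (a$i) (b$i)"] by simp
  qed
  ultimately show ?thesis by (simp add: sum_subtractf)
qed

lemma cubes_crossed_ge:
  fixes a b :: "real^'d"
  assumes "open_segment a b \<inter> skeleton = {}" "a \<noteq> b"
  shows "(\<Sum>i\<in>UNIV. \<bar>b$i - a$i\<bar>) - CARD('d) \<le> real (cubes_crossed a b)"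
  using card_crossings_ge[of b a] card_crossings_le_cubes_crossed[OF assms] by linarith

section \<open>Counting lattice points\<close>

lemma card_lattice_box_le:
  fixes J :: "'d::finite set" and N :: nat
  defines "R \<equiv> {r::int^'d. \<forall>i. (i \<in> J \<longrightarrow> \<bar>r$i\<bar> \<le> int N) \<and> (i \<notin> J \<longrightarrow> r$i = 0)}"
  shows "finite R" "card R \<le> (2 * N + 1) ^ card J"
proof -
  define f where "f r = restrict (vec_nth r) J" for r :: "int^'d"
  have inj: "inj_on f R"
  proof (rule inj_onI)
    fix r s assume "r \<in> R" "s \<in> R" "f r = f s"
    then have "r$i = s$i" for i
      unfolding R_def f_def by (cases "i \<in> J") (auto dest: fun_cong[of _ _ i])
    then show "r = s" by (simp add: vec_eq_iff)
  qed
  have img: "f ` R \<subseteq> PiE J (\<lambda>_. {- int N..int N})"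
    unfolding R_def f_def by (auto simp: abs_le_iff)
  have fin: "finite (PiE J (\<lambda>_. {- int N..int N}))" by (simp add: finite_PiE)
  have "card (PiE J (\<lambda>_. {- int N..int N})) = (2 * N + 1) ^ card J"
    by (simp add: card_PiE) (simp add: nat_add_distrib nat_mult_distrib)
  then show "card R \<le> (2 * N + 1) ^ card J" using card_inj_on_le[OF inj img fin] by simp
  show "finite R" using finite_imageD[OF finite_subset[OF img fin] inj] .
qed

definition lattice_shell :: "nat \<Rightarrow> nat \<Rightarrow> (int^'d) set" where
  "lattice_shell n c = {m. int n - int c \<le> (\<Sum>i\<in>UNIV. \<bar>m$i\<bar>) \<and> (\<Sum>i\<in>UNIV. \<bar>m$i\<bar>) \<le> int n + int c}"

text \<open>A point of the shell is determined by its coordinates off a fixed axis $j_0$, its norm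
  and the sign of its $j_0$-th coordinate.\<close>

lemma card_lattice_shell_le:
  shows "finite (lattice_shell n c :: (int^'d) set)"
    and "card (lattice_shell n c :: (int^'d) set) \<le> (2 * (n + c) + 1) ^ (CARD('d) - 1) * ((2 * c + 1) * 2)"
proof -
  define M where "M = (lattice_shell n c :: (int^'d) set)"
  fix j0 :: 'd
  define R where "R = {r::int^'d. \<forall>i. (i \<in> UNIV - {j0} \<longrightarrow> \<bar>r$i\<bar> \<le> int (n + c)) \<and> (i \<notin> UNIV - {j0} \<longrightarrow> r$i = 0)}"
  define h where "h m = ((\<chi> i. if i = j0 then 0 else m$i) :: int^'d,
      nat ((\<Sum>i\<in>UNIV. \<bar>m$i\<bar>) - (int n - int c)), 0 \<le> m$j0)" for m :: "int^'d"
  have split: "(\<Sum>i\<in>UNIV. \<bar>m$i\<bar>) = \<bar>m$j0\<bar> + (\<Sum>i\<in>UNIV - {j0}. \<bar>m$i\<bar>)" for m :: "int^'d"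
    by (simp add: sum.remove)
  have inj: "inj_on h M"
  proof (rule inj_onI)
    fix m m' assume mm: "m \<in> M" "m' \<in> M" "h m = h m'"
    have off_axis: "m$i = m'$i" if "i \<noteq> j0" for i
      using mm(3) that unfolding h_def by (auto simp: vec_eq_iff dest: spec[of _ i])
    have "(\<Sum>i\<in>UNIV. \<bar>m$i\<bar>) = (\<Sum>i\<in>UNIV. \<bar>m'$i\<bar>)"
      using mm unfolding h_def M_def lattice_shell_def by auto
    moreover have "(\<Sum>i\<in>UNIV - {j0}. \<bar>m$i\<bar>) = (\<Sum>i\<in>UNIV - {j0}. \<bar>m'$i\<bar>)"
      using off_axis by (intro sum.cong) auto
    ultimately have "\<bar>m$j0\<bar> = \<bar>m'$j0\<bar>" using split[of m] split[of m'] by linarith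
    moreover have "(0 \<le> m$j0) = (0 \<le> m'$j0)" using mm(3) unfolding h_def by simp
    ultimately have "m$j0 = m'$j0" by (auto simp: abs_if split: if_splits)
    then have "m$i = m'$i" for i using off_axis by (cases "i = j0") auto
    then show "m = m'" by (simp add: vec_eq_iff)
  qed
  have img: "h ` M \<subseteq> R \<times> {0..2 * c} \<times> UNIV"
  proof
    fix x assume "x \<in> h ` M"
    then obtain m where m: "m \<in> M" "x = h m" by blast
    have "\<bar>m$i\<bar> \<le> (\<Sum>i\<in>UNIV. \<bar>m$i\<bar>)" for i by (rule member_le_sum) auto
    moreover have "(\<Sum>i\<in>UNIV. \<bar>m$i\<bar>) \<le> int (n + c)" using m(1) unfolding M_def lattice_shell_def by simp
    ultimately have "\<bar>m$i\<bar> \<le> int (n + c)" for i by (rule order_trans)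
    then show "x \<in> R \<times> {0..2 * c} \<times> UNIV" using m unfolding h_def R_def M_def lattice_shell_def by auto
  qed
  note box = card_lattice_box_le[of "UNIV - {j0}" "n + c", folded R_def]
  have fin: "finite (R \<times> {0..2 * c} \<times> (UNIV :: bool set))" using box(1) by simp
  show "finite (lattice_shell n c :: (int^'d) set)"
    using finite_imageD[OF finite_subset[OF img fin] inj] unfolding M_def .
  have "card M \<le> card (R \<times> {0..2 * c} \<times> (UNIV :: bool set))"
    by (rule card_inj_on_le[OF inj img fin])
  also have "\<dots> = card R * ((2 * c + 1) * 2)" by (simp add: card_cartesian_product)
  also have "\<dots> \<le> (2 * (n + c) + 1) ^ (CARD('d) - 1) * ((2 * c + 1) * 2)"
    using box(2) by (intro mult_right_mono) (simp_all add: card_Diff_singleton)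
  finally show "card (lattice_shell n c :: (int^'d) set) \<le> (2 * (n + c) + 1) ^ (CARD('d) - 1) * ((2 * c + 1) * 2)"
    unfolding M_def .
qed

section \<open>Counting diagonals\<close>

lemma face_index_in_lattice_shell:
  fixes a b :: "real^'d"
  assumes "open_segment a b \<inter> skeleton = {}" "a \<noteq> b" "a \<in> unit_cube 0" "b \<in> tess_face m S"
  shows "m \<in> lattice_shell (cubes_crossed a b) (2 * CARD('d) + 1)"
proof -
  define D where "D = (\<Sum>i\<in>UNIV. \<bar>b$i - a$i\<bar>)"
  have near: "\<bar>b$i - a$i\<bar> - 1 \<le> \<bar>of_int (m$i)\<bar> \<and> \<bar>of_int (m$i)\<bar> \<le> \<bar>b$i - a$i\<bar> + 1" for i
  proof -
    have "0 \<le> a$i \<and> a$i \<le> 1" using assms(3) unfolding unit_cube_def by simp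
    then show ?thesis using tess_face_coordinate_bounds[OF assms(4), of i] by linarith
  qed
  have "D - CARD('d) \<le> (\<Sum>i\<in>UNIV. \<bar>of_int (m$i)\<bar>)"
    using sum_mono[of UNIV "\<lambda>i. \<bar>b$i - a$i\<bar> - 1"] near unfolding D_def by (simp add: sum_subtractf)
  moreover have "(\<Sum>i\<in>UNIV. \<bar>of_int (m$i)\<bar>) \<le> D + CARD('d)"
    using sum_mono[of UNIV _ "\<lambda>i. \<bar>b$i - a$i\<bar> + 1"] near unfolding D_def by (simp add: sum.distrib)
  moreover have "real (cubes_crossed a b) \<le> D + CARD('d) + 1" "D - CARD('d) \<le> real (cubes_crossed a b)"
    using cubes_crossed_le(2) cubes_crossed_ge[OF assms(1,2)] unfolding D_def by auto
  ultimately have "real_of_int (int (cubes_crossed a b) - int (2 * CARD('d) + 1)) \<le> of_int (\<Sum>i\<in>UNIV. \<bar>m$i\<bar>)"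
    and "of_int (\<Sum>i\<in>UNIV. \<bar>m$i\<bar>) \<le> real_of_int (int (cubes_crossed a b) + int (2 * CARD('d) + 1))"
    by simp_all
  then show ?thesis unfolding lattice_shell_def of_int_le_iff by simp
qed

lemma Diag_mem_faces:
  fixes X :: "((real^'d) \<times> (real^'d)) set"
  assumes "X \<in> Diag n"
  shows "\<exists>m S m' S'. X = diagonal (tess_face m S) (tess_face m' S') \<and> (\<forall>i. \<bar>m$i\<bar> \<le> 1)
                      \<and> m' \<in> lattice_shell n (2 * CARD('d) + 1)"
proof -
  obtain m S m' S' where X: "X = diagonal (tess_face m S) (tess_face m' S')"
    and length: "comb_length (tess_face m S) (tess_face m' S') n"
    and initial: "\<forall>(a, b) \<in> X. initial_in_unit_cube a b" and "X \<noteq> {}"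
    using assms unfolding Diag_def low_faces_def by blast
  then obtain a b where ab: "(a, b) \<in> X" by auto
  then have a: "a \<in> tess_face m S" and b: "b \<in> tess_face m' S'" and "a \<noteq> b"
    and avoid: "open_segment a b \<inter> skeleton = {}"
    unfolding X diagonal_def by auto
  have "cubes_crossed a b = n" using length ab unfolding X comb_length_def by auto
  have "a \<in> unit_cube 0"
    using initial ab unfolding initial_in_unit_cube_def by (auto simp: subset_iff)
  have "\<bar>m$i\<bar> \<le> 1" for i
  proof -
    have "0 \<le> a$i \<and> a$i \<le> 1" using \<open>a \<in> unit_cube 0\<close> unfolding unit_cube_def by simp
    then have "real_of_int (m$i) \<le> 1" "- 1 \<le> real_of_int (m$i)"
      using tess_face_coordinate_bounds[OF a, of i] by linarith+
    then show ?thesis by linarith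
  qed
  moreover have "m' \<in> lattice_shell n (2 * CARD('d) + 1)"
    using face_index_in_lattice_shell[OF avoid \<open>a \<noteq> b\<close> \<open>a \<in> unit_cube 0\<close> b] \<open>cubes_crossed a b = n\<close>
    by simp
  ultimately show ?thesis using X by blast
qed

lemma card_Diag_le:
  shows "finite (Diag n :: ((real^'d) \<times> (real^'d)) set set)"
    and "card (Diag n :: ((real^'d) \<times> (real^'d)) set set)
           \<le> 12 ^ CARD('d) * card (lattice_shell n (2 * CARD('d) + 1) :: (int^'d) set)"
proof -
  define Box where "Box = {r::int^'d. \<forall>i. \<bar>r$i\<bar> \<le> 1}"
  define Shell where "Shell = (lattice_shell n (2 * CARD('d) + 1) :: (int^'d) set)"
  define Q where "Q = (Box \<times> (UNIV :: 'd set set)) \<times> (Shell \<times> (UNIV :: 'd set set))"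
  let ?F = "\<lambda>((m, S), (m', S')). diagonal (tess_face m S) (tess_face m' S')"
  have box: "finite Box" "card Box \<le> 3 ^ CARD('d)"
    using card_lattice_box_le[of UNIV 1] unfolding Box_def by simp_all
  have "Diag n \<subseteq> ?F ` Q"
  proof
    fix X assume "X \<in> (Diag n :: ((real^'d) \<times> (real^'d)) set set)"
    then obtain m S m' S' where "X = diagonal (tess_face m S) (tess_face m' S')"
      "\<forall>i. \<bar>m$i\<bar> \<le> 1" "m' \<in> Shell"
      using Diag_mem_faces unfolding Shell_def by blast
    then show "X \<in> ?F ` Q" unfolding Q_def Box_def by (intro image_eqI[of _ _ "((m, S), (m', S'))"]) auto
  qed
  moreover have "finite Q" unfolding Q_def Shell_def using box(1) card_lattice_shell_le(1) by (intro finite_cartesian_product) auto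
  ultimately show "finite (Diag n :: ((real^'d) \<times> (real^'d)) set set)"
    using finite_surj by blast
  have "card (Diag n :: ((real^'d) \<times> (real^'d)) set set) \<le> card Q"
    using \<open>Diag n \<subseteq> ?F ` Q\<close> \<open>finite Q\<close> surj_card_le by blast
  also have "\<dots> = card Box * 2 ^ CARD('d) * (card Shell * 2 ^ CARD('d))"
    unfolding Q_def by (simp add: card_cartesian_product card_UNIV_set)
  also have "\<dots> \<le> 3 ^ CARD('d) * 2 ^ CARD('d) * (card Shell * 2 ^ CARD('d))"
    using box(2) by simp
  also have "\<dots> = 12 ^ CARD('d) * card Shell"
    by (simp add: power_mult_distrib[symmetric])
  finally show "card (Diag n :: ((real^'d) \<times> (real^'d)) set set) \<le> 12 ^ CARD('d) * card (lattice_shell n (2 * CARD('d) + 1) :: (int^'d) set)"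
    unfolding Shell_def .
qed

theorem mainTheorem13:
  assumes "CARD('d::finite) \<ge> 2"
  shows "\<exists>C>0. \<forall>n::nat. n \<ge> 1 \<longrightarrow>
           finite (Diag n :: (((real^'d) \<times> (real^'d)) set) set) \<and>
           real (card (Diag n :: (((real^'d) \<times> (real^'d)) set) set)) \<le> C * real n ^ (CARD('d) - 1)"
proof -
  define d where "d = CARD('d)"
  define c where "c = 2 * d + 1"
  define K where "K = 12 ^ d * ((2 * c + 1) * 2) * (2 * c + 3) ^ (d - 1)"
  have "card (Diag n :: (((real^'d) \<times> (real^'d)) set) set) \<le> K * n ^ (d - 1)" if "n \<ge> 1" for n
  proof -
    have "c \<le> c * n" using that by simp
    then have "2 * (n + c) + 1 \<le> 2 * (c * n) + 3 * n" using that by arith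
    then have "2 * (n + c) + 1 \<le> (2 * c + 3) * n" by (simp add: algebra_simps)
    then have shell: "(2 * (n + c) + 1) ^ (d - 1) \<le> ((2 * c + 3) * n) ^ (d - 1)" by (rule power_mono) simp
    have "card (Diag n :: (((real^'d) \<times> (real^'d)) set) set) \<le> 12 ^ d * card (lattice_shell n c :: (int^'d) set)"
      using card_Diag_le(2) unfolding c_def d_def .
    also have "\<dots> \<le> 12 ^ d * ((2 * (n + c) + 1) ^ (d - 1) * ((2 * c + 1) * 2))"
      using card_lattice_shell_le(2) unfolding d_def by simp
    also have "\<dots> \<le> 12 ^ d * (((2 * c + 3) * n) ^ (d - 1) * ((2 * c + 1) * 2))"
      using shell by (intro mult_le_mono2 mult_le_mono1)
    also have "\<dots> = K * n ^ (d - 1)" unfolding K_def power_mult_distrib by (simp only: mult_ac)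
    finally show ?thesis .
  qed
  then have "real (card (Diag n :: (((real^'d) \<times> (real^'d)) set) set)) \<le> real K * real n ^ (CARD('d) - 1)"
    if "n \<ge> 1" for n
    using that unfolding d_def by (metis of_nat_le_iff of_nat_mult of_nat_power)
  moreover have "K > 0" unfolding K_def by simp
  ultimately show ?thesis using card_Diag_le(1) of_nat_0_less_iff by blast
qed

end
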